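(* For $N\ge1$ let $\mathbf{m}=N(1,0,\dots,0)^\top\in\mathbb{R}^{N+1}$, $\mathbf{M}=\mathrm{diag}(\mathbf{m})$, and let $\mathbf{Q}_N$ be the tridiagonal matrix with $(\mathbf{Q}_N)_{kk}=-N$, $(\mathbf{Q}_N)_{k+1,k}=N-k$, $(\mathbf{Q}_N)_{k-1,k}=k$ (indices $0,\dots,N$) and zeros elsewhere. Fix $\mu>0$, let $\mathbf{p}=(p_0,\dots,p_N)$ be the positive vector with $\sum_ip_i=1$ satisfying $(\mathbf{M}+\mu\mathbf{Q}_N)\mathbf{p}=\overline{m}\,\mathbf{p}$ with $\overline{m}=\mathbf{m}\cdot\mathbf{p}$, let $\overline{r}=\overline{m}/N$ and $u=\mu/\overline{r}$. Then for every $a\in\{1,\dots,N\}$, $$\left|p_a-\frac{u^a}{(1+u)^{a+1}}\right|\le\frac{u^{a+1}2^a(a+1)}{\sqrt{N}}+\left(1-\frac{\binom{N}{a}a!}{N^a}\right)\frac{u^a}{(1+u)^{a+1}}.$$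
   Context: $\mathbf{p}$ is the normalized Perron eigenvector of $\mathbf{M}+\mu\mathbf{Q}_N$ (Crow–Kimura quasispecies model with single peaked fitness landscape) and $\overline{m}$ is the corresponding dominant eigenvalue. *)

theory Defs
  imports Complex_Main
begin

text \<open>Vectors in R^(N+1) and (N+1)x(N+1) matrices are indexed by 0..N and represented
  as functions nat => real resp. nat => nat => real (entries outside 0..N irrelevant).\<close>

definition fit_vec :: "nat \<Rightarrow> nat \<Rightarrow> real" where
  "fit_vec N i = (if i = 0 then real N else 0)"

definition fit_mat :: "nat \<Rightarrow> nat \<Rightarrow> nat \<Rightarrow> real" where
  "fit_mat N i j = (if i = j then fit_vec N i else 0)"

definition mut_mat :: "nat \<Rightarrow> nat \<Rightarrow> nat \<Rightarrow> real" where
  "mut_mat N i j =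
     (if i = j then - real N
      else if i = j + 1 then real N - real j
      else if j = i + 1 then real j
      else 0)"

definition mat_vec :: "nat \<Rightarrow> (nat \<Rightarrow> nat \<Rightarrow> real) \<Rightarrow> (nat \<Rightarrow> real) \<Rightarrow> nat \<Rightarrow> real" where
  "mat_vec N A x i = (\<Sum>j = 0..N. A i j * x j)"

definition dot_vec :: "nat \<Rightarrow> (nat \<Rightarrow> real) \<Rightarrow> (nat \<Rightarrow> real) \<Rightarrow> real" where
  "dot_vec N x y = (\<Sum>i = 0..N. x i * y i)"

end

theory Submission
  imports Defs
begin

text \<open>With u = mu / p(0), the eigen-equations divided by p(0) become the three-term recurrence
  (1 + u) p(k) = u (1 - (k-1)/N) p(k-1) + u (k+1)/N p(k+1), with (1 + u) p(0) = 1 + u p(1)/N,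
  and adding up the equations of all rows k >= j gives p(j) <= u p(j-1), hence p(j) <= u^j.
  Dropping the forward term and inducting on a bounds p(a) from below by N!/((N-a)! N^a) times the
  geometric weight u^a/(1+u)^(a+1); bounding the forward term by u^(a+2) instead and dropping the
  factor 1 - (k-1)/N bounds the excess of p(a) over the geometric weight by
  u^(a+2) (a+1)(a+2) / (2N(1+u)), which is O(1/N).\<close>

definition geom_weight :: "real \<Rightarrow> nat \<Rightarrow> real" where
  "geom_weight u a = u ^ a / (1 + u) ^ (a + 1)"

definition falling_power_ratio :: "nat \<Rightarrow> nat \<Rightarrow> real" where
  "falling_power_ratio N a = real (N choose a) * fact a / real N ^ a"

lemma geom_weight_Suc: "geom_weight u (Suc a) = u / (1 + u) * geom_weight u a"
  by (simp add: geom_weight_def)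

lemma geom_weight_nonneg: "0 \<le> u \<Longrightarrow> 0 \<le> geom_weight u a"
  by (simp add: geom_weight_def)

lemma falling_power_ratio_0 [simp]: "falling_power_ratio N 0 = 1"
  by (simp add: falling_power_ratio_def)

lemma falling_power_ratio_Suc:
  assumes "a \<le> N" and "N > 0"
  shows "falling_power_ratio N (Suc a) = falling_power_ratio N a * (1 - real a / real N)"
proof -
  have binom: "real (N choose Suc a) * real (Suc a) = real (N choose a) * real (N - a)"
    by (metis binomial_absorb_comp binomial_absorption mult.commute of_nat_mult)
  have "falling_power_ratio N (Suc a)
      = real (N choose Suc a) * real (Suc a) * fact a / (real N * real N ^ a)"
    by (simp add: falling_power_ratio_def algebra_simps)
  also have "\<dots> = real (N choose a) * real (N - a) * fact a / (real N * real N ^ a)"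
    by (simp only: binom)
  also have "\<dots> = falling_power_ratio N a * (1 - real a / real N)"
    using assms by (simp add: falling_power_ratio_def field_simps)
  finally show ?thesis .
qed

lemma falling_power_ratio_nonneg: "0 \<le> falling_power_ratio N a"
  by (simp add: falling_power_ratio_def)

lemma falling_power_ratio_le_1: "a \<le> N \<Longrightarrow> falling_power_ratio N a \<le> 1"
proof (induction a)
  case (Suc a)
  then have "0 \<le> 1 - real a / real N" "1 - real a / real N \<le> 1"
    by (auto simp: field_simps)
  with Suc show ?case
    by (simp add: falling_power_ratio_Suc falling_power_ratio_nonneg mult_le_one)
qed simp

lemma quadratic_error_le:
  fixes u :: real
  assumes "u > 0" and "N \<ge> 1"
  shows "u ^ (a + 2) * (real a + 1) * (real a + 2) / (2 * real N * (1 + u))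
    \<le> u ^ (a + 1) * 2 ^ a * real (a + 1) / sqrt (real N)"
proof -
  have "u / (1 + u) \<le> 1" using assms by simp
  moreover have "(real a + 2) / 2 \<le> 2 ^ a"
  proof -
    have "a + 2 \<le> 2 * (2::nat) ^ a"
      using less_exp[of "Suc a"] by simp
    then have "real (a + 2) \<le> real (2 * 2 ^ a)"
      by (simp only: of_nat_le_iff)
    then show ?thesis by simp
  qed
  moreover have "1 / real N \<le> 1 / sqrt (real N)"
  proof -
    have "sqrt (real N) \<le> real N"
      using assms by (intro real_le_lsqrt) (auto simp: power2_eq_square)
    then show ?thesis
      using assms by (simp add: frac_le)
  qed
  ultimately have "u / (1 + u) * ((real a + 2) / 2) * (1 / real N)
      \<le> 1 * 2 ^ a * (1 / sqrt (real N))"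
    using assms by (intro mult_mono) auto
  then have "u ^ (a + 1) * (real a + 1) * (u / (1 + u) * ((real a + 2) / 2) * (1 / real N))
      \<le> u ^ (a + 1) * (real a + 1) * (1 * 2 ^ a * (1 / sqrt (real N)))"
    using assms by (intro mult_left_mono) auto
  then show ?thesis
    using assms by (simp add: field_simps)
qed

lemma dot_vec_fit_vec: "dot_vec N (fit_vec N) p = real N * p 0"
  unfolding dot_vec_def fit_vec_def by (simp add: sum.atLeast_Suc_atMost)

lemma mat_vec_fit_mut:
  assumes "k \<le> N"
  shows "mat_vec N (\<lambda>i j. fit_mat N i j + mu * mut_mat N i j) p k =
    (if k = 0 then real N * p 0 else 0) + mu * (- real N * p k
      + (if k \<ge> 1 then (real N - real k + 1) * p (k - 1) else 0)
      + (if k < N then (real k + 1) * p (k + 1) else 0))"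
proof -
  have entry: "(fit_mat N k j + mu * mut_mat N k j) * p j =
     (if j = k then fit_vec N k * p k else 0) + mu * ((if j = k then - real N * p k else 0)
      + (if j = k - 1 \<and> k \<ge> 1 then (real N - real j) * p j else 0)
      + (if j = k + 1 then real j * p j else 0))" for j
    by (auto simp: fit_mat_def mut_mat_def algebra_simps)
  have lower: "(\<Sum>j=0..N. if j = k - 1 \<and> k \<ge> 1 then (real N - real j) * p j else 0)
     = (if k \<ge> 1 then (real N - real k + 1) * p (k - 1) else 0)"
    using assms by (cases "k \<ge> 1") (auto simp: sum.delta' of_nat_diff cong: conj_cong)
  have upper: "(\<Sum>j=0..N. if j = k + 1 then real j * p j else 0)
     = (if k < N then (real k + 1) * p (k + 1) else 0)"
    by (simp add: sum.delta')
  show ?thesis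
    unfolding mat_vec_def entry sum.distrib sum_distrib_left[symmetric] lower upper
    using assms by (simp add: sum.delta' fit_vec_def)
qed

lemma balance_tail_sum:
  fixes mu m :: real and p :: "nat \<Rightarrow> real"
  assumes balance: "\<And>k. 1 \<le> k \<Longrightarrow> k \<le> N \<Longrightarrow>
      mu * (- real N * p k + (real N - real k + 1) * p (k - 1)
        + (if k < N then (real k + 1) * p (k + 1) else 0)) = m * p k"
    and "1 \<le> j" and "j \<le> N"
  shows "mu * ((real N - real j + 1) * p (j - 1) - real j * p j) = m * (\<Sum>k = j..N. p k)"
  using \<open>j \<le> N\<close> \<open>1 \<le> j\<close>
proof (induction j rule: inc_induct)
  case base
  then show ?case using balance[of N] by (simp add: algebra_simps)
next
  case (step j)
  then show ?case using balance[of j] by (simp add: sum.atLeast_Suc_atMost algebra_simps)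
qed

locale quasispecies_eigenvector =
  fixes N :: nat and mu :: real and p :: "nat \<Rightarrow> real"
  assumes N_ge_1: "N \<ge> 1" and mu_pos: "mu > 0"
    and p_pos: "\<And>i. i \<le> N \<Longrightarrow> p i > 0"
    and p_sum: "(\<Sum>i = 0..N. p i) = 1"
    and eigen: "\<And>k. k \<le> N \<Longrightarrow>
      mat_vec N (\<lambda>i j. fit_mat N i j + mu * mut_mat N i j) p k = dot_vec N (fit_vec N) p * p k"
begin

text \<open>The mean fitness is \<open>N * p 0\<close>, so the paper's \<open>rbar\<close> is \<open>p 0\<close>.\<close>

definition u :: real where "u = mu / p 0"

lemma u_pos: "u > 0"
  using mu_pos p_pos[of 0] by (simp add: u_def)

lemma p0_recurrence: "(1 + u) * p 0 = 1 + u * p 1 / real N"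
proof -
  have "real N * p 0 + mu * (p 1 - real N * p 0) = real N * p 0 * p 0"
    using eigen[of 0] mat_vec_fit_mut[of 0 N mu p] N_ge_1
    by (simp add: dot_vec_fit_vec algebra_simps)
  then show ?thesis
    using p_pos[of 0] N_ge_1 by (simp add: u_def field_simps)
qed

lemma balance:
  assumes "1 \<le> k" and "k \<le> N"
  shows "u * (- real N * p k + (real N - real k + 1) * p (k - 1)
      + (if k < N then (real k + 1) * p (k + 1) else 0)) = real N * p k"
proof -
  have "mu * (- real N * p k + (real N - real k + 1) * p (k - 1)
      + (if k < N then (real k + 1) * p (k + 1) else 0)) = real N * p 0 * p k"
    using eigen[of k] mat_vec_fit_mut[of k N mu p] assms by (simp add: dot_vec_fit_vec)
  then show ?thesis
    using p_pos[of 0] by (simp add: u_def field_simps)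
qed

lemma p_le_u_mult:
  assumes "1 \<le> j" and "j \<le> N"
  shows "p j \<le> u * p (j - 1)"
proof -
  have "real N * p j \<le> real N * (\<Sum>k = j..N. p k)"
    using assms p_pos by (intro mult_left_mono member_le_sum) (auto intro: less_imp_le)
  also have "\<dots> = u * ((real N - real j + 1) * p (j - 1) - real j * p j)"
    using balance_tail_sum[OF balance assms] by simp
  also have "\<dots> \<le> u * (real N * p (j - 1))"
  proof -
    have "0 < p (j - 1)" using assms p_pos by simp
    then have "p (j - 1) \<le> real j * p (j - 1)" and "0 \<le> real j * p j"
      using assms p_pos[of j] by (simp_all add: mult_le_cancel_right1)
    then show ?thesis
      using u_pos by (intro mult_left_mono) (auto simp: algebra_simps)
  qed
  finally show ?thesis
    using N_ge_1 by (simp add: algebra_simps)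
qed

lemma p_le_u_power: "j \<le> N \<Longrightarrow> p j \<le> u ^ j"
proof (induction j)
  case 0
  have "p 0 \<le> (\<Sum>i = 0..N. p i)"
    using p_pos by (intro member_le_sum) (auto intro: less_imp_le)
  then show ?case using p_sum by simp
next
  case (Suc j)
  have "p (Suc j) \<le> u * p j" using p_le_u_mult[of "Suc j"] Suc by simp
  also have "\<dots> \<le> u * u ^ j" using Suc u_pos by (intro mult_left_mono) auto
  finally show ?case by simp
qed

lemma p_recurrence:
  assumes "1 \<le> k" and "k \<le> N"
  shows "(1 + u) * p k = u * (1 - (real k - 1) / real N) * p (k - 1)
    + (if k < N then u * (real k + 1) / real N * p (k + 1) else 0)"
proof -
  have "real N * ((1 + u) * p k) = u * ((real N - real k + 1) * p (k - 1)
      + (if k < N then (real k + 1) * p (k + 1) else 0))"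
    using balance[OF assms] by (simp add: algebra_simps)
  then have "(1 + u) * p k = u * ((real N - real k + 1) * p (k - 1)
      + (if k < N then (real k + 1) * p (k + 1) else 0)) / real N"
    using N_ge_1 by (simp add: eq_divide_eq ac_simps)
  also have "\<dots> = u * (1 - (real k - 1) / real N) * p (k - 1)
      + (if k < N then u * (real k + 1) / real N * p (k + 1) else 0)"
    using N_ge_1 by (simp add: field_simps)
  finally show ?thesis .
qed

lemma falling_power_ratio_geom_weight_le:
  "a \<le> N \<Longrightarrow> falling_power_ratio N a * geom_weight u a \<le> p a"
proof (induction a)
  case 0
  have "1 \<le> (1 + u) * p 0"
    using p0_recurrence u_pos p_pos[of 1] N_ge_1 by simp
  then show ?case
    using u_pos by (simp add: geom_weight_def field_simps)
next
  case (Suc a)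
  have shrink: "0 \<le> 1 - real a / real N" using Suc by simp
  have "(1 + u) * (falling_power_ratio N (Suc a) * geom_weight u (Suc a))
      = u * (1 - real a / real N) * (falling_power_ratio N a * geom_weight u a)"
    using Suc u_pos N_ge_1 by (simp add: falling_power_ratio_Suc geom_weight_Suc)
  also have "\<dots> \<le> u * (1 - real a / real N) * p a"
    using Suc shrink u_pos by (intro mult_left_mono) auto
  also have "\<dots> \<le> (1 + u) * p (Suc a)"
  proof -
    have "0 \<le> (if Suc a < N then u * (real (Suc a) + 1) / real N * p (Suc a + 1) else 0)"
      using u_pos p_pos[of "Suc a + 1"] by (simp add: Suc_le_eq less_imp_le)
    then show ?thesis
      using p_recurrence[of "Suc a"] Suc by simp
  qed
  finally show ?case
    using u_pos by simp
qed

lemma p_Suc_le_recurrence: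
  assumes "Suc a \<le> N"
  shows "(1 + u) * p (Suc a) \<le> u * p a + u * (real a + 2) / real N * u ^ (a + 2)"
proof -
  have "u * (1 - real a / real N) * p a \<le> u * p a"
    using u_pos p_pos[of a] assms by (simp add: mult_le_cancel_left field_simps)
  moreover have "(if Suc a < N then u * (real (Suc a) + 1) / real N * p (Suc a + 1) else 0)
      \<le> u * (real a + 2) / real N * u ^ (a + 2)"
    using u_pos p_le_u_power[of "a + 2"]
    by (auto simp: Suc_le_eq add.commute intro!: divide_right_mono mult_left_mono)
  ultimately show ?thesis
    using p_recurrence[of "Suc a"] assms by simp
qed

lemma p_minus_geom_weight_le:
  "a \<le> N \<Longrightarrow>
    p a - geom_weight u a \<le> u ^ (a + 2) * (real a + 1) * (real a + 2) / (2 * real N * (1 + u))"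
proof (induction a)
  case 0
  have "u * p 1 \<le> u * u" using p_le_u_power[of 1] N_ge_1 u_pos by (intro mult_left_mono) auto
  then have "(1 + u) * p 0 \<le> 1 + u * u / real N"
    unfolding p0_recurrence by (simp add: divide_right_mono)
  then have "p 0 \<le> (1 + u * u / real N) / (1 + u)"
    using u_pos by (simp add: field_simps)
  also have "\<dots> = geom_weight u 0
      + u ^ (0 + 2) * (real 0 + 1) * (real 0 + 2) / (2 * real N * (1 + u))"
    using u_pos N_ge_1 by (simp add: geom_weight_def add_divide_distrib power2_eq_square)
  finally show ?case
    by simp
next
  case (Suc a)
  define B where "B = u ^ (a + 3) * (real a + 1) * (real a + 2) / (2 * real N)"
  have B_nonneg: "0 \<le> B" using u_pos by (simp add: B_def)
  have "(1 + u) * p (Suc a) \<le> u * p a + u * (real a + 2) / real N * u ^ (a + 2)"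
    using p_Suc_le_recurrence[OF Suc.prems] .
  moreover have "u * (p a - geom_weight u a) \<le> B / (1 + u)"
  proof -
    have "u * (p a - geom_weight u a)
        \<le> u * (u ^ (a + 2) * (real a + 1) * (real a + 2) / (2 * real N * (1 + u)))"
      using Suc u_pos by (intro mult_left_mono) auto
    also have "\<dots> = B / (1 + u)"
      by (simp add: B_def power_add power2_eq_square power3_eq_cube)
    finally show ?thesis .
  qed
  moreover have "B / (1 + u) \<le> B"
    using B_nonneg u_pos by (simp add: divide_le_eq mult_le_cancel_left1)
  moreover have "(1 + u) * geom_weight u (Suc a) = u * geom_weight u a"
    using u_pos by (simp add: geom_weight_Suc)
  ultimately have "(1 + u) * (p (Suc a) - geom_weight u (Suc a))
      \<le> B + u * (real a + 2) / real N * u ^ (a + 2)"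
    by (simp add: algebra_simps)
  also have "\<dots> = u ^ (Suc a + 2) * (real (Suc a) + 1) * (real (Suc a) + 2) / (2 * real N)"
    using N_ge_1 by (simp add: B_def field_simps power_add power3_eq_cube)
  finally have "p (Suc a) - geom_weight u (Suc a)
      \<le> u ^ (Suc a + 2) * (real (Suc a) + 1) * (real (Suc a) + 2) / (2 * real N) / (1 + u)"
    using u_pos by (subst pos_le_divide_eq) (auto simp: mult.commute)
  then show ?case
    by (simp add: divide_divide_eq_left)
qed

lemma abs_p_minus_geom_weight_le:
  assumes "a \<le> N"
  shows "\<bar>p a - geom_weight u a\<bar>
    \<le> u ^ (a + 1) * 2 ^ a * real (a + 1) / sqrt (real N)
       + (1 - falling_power_ratio N a) * geom_weight u a"
proof -
  have "0 \<le> (1 - falling_power_ratio N a) * geom_weight u a"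
    using assms falling_power_ratio_le_1 geom_weight_nonneg u_pos by simp
  moreover have "0 \<le> u ^ (a + 1) * 2 ^ a * real (a + 1) / sqrt (real N)"
    using u_pos by simp
  ultimately show ?thesis
    using falling_power_ratio_geom_weight_le[OF assms] p_minus_geom_weight_le[OF assms]
      quadratic_error_le[OF u_pos N_ge_1, of a]
    by (simp add: abs_le_iff algebra_simps)
qed

end

theorem lemma1:
  fixes N :: nat and mu :: real and p :: "nat \<Rightarrow> real"
  assumes "N \<ge> 1" and "mu > 0"
    and "\<forall>i\<le>N. p i > 0"
    and "(\<Sum>i = 0..N. p i) = 1"
    and "\<forall>k\<le>N. mat_vec N (\<lambda>i j. fit_mat N i j + mu * mut_mat N i j) p k
                    = dot_vec N (fit_vec N) p * p k"
  shows "\<forall>a \<in> {1..N}.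
    let mbar = dot_vec N (fit_vec N) p; rbar = mbar / real N; u = mu / rbar in
    \<bar>p a - u ^ a / (1 + u) ^ (a + 1)\<bar>
      \<le> u ^ (a + 1) * 2 ^ a * real (a + 1) / sqrt (real N)
         + (1 - real (N choose a) * fact a / real N ^ a) * (u ^ a / (1 + u) ^ (a + 1))"
proof -
  interpret quasispecies_eigenvector N mu p
    using assms by unfold_locales auto
  have rbar: "dot_vec N (fit_vec N) p / real N = p 0"
    using assms(1) by (simp add: dot_vec_fit_vec)
  show ?thesis
    unfolding Let_def rbar u_def[symmetric]
    using abs_p_minus_geom_weight_le by (simp add: geom_weight_def falling_power_ratio_def)
qed

end
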